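(* Let $\psi$ be a complete Bernstein function, not identically zero, and for $\lambda>0$ let \[\vartheta_\lambda=-\frac1\pi\int_0^\infty\frac{\lambda}{\lambda^2-\zeta^2}\log\frac{\psi'(\lambda^2)(\lambda^2-\zeta^2)}{\psi(\lambda^2)-\psi(\zeta^2)}\,d\zeta.\] Then for every $\lambda>0$, \[\Big(\inf_{\xi>0}\frac{\xi|\psi''(\xi)|}{\psi'(\xi)}\Big)\frac\pi4\le\vartheta_\lambda\le\Big(\sup_{\xi>0}\frac{\xi|\psi''(\xi)|}{\psi'(\xi)}\Big)\frac\pi4.\]
   Context: A function $f$ on $(0,\infty)$ is a complete Bernstein function if $f(z)=c_1+c_2z+\frac1\pi\int_{(0,\infty)}\frac{z}{z+s}\frac{m(ds)}{s}$ with $c_1,c_2\ge0$, $m$ a Radon measure on $(0,\infty)$ with $\int\min(s^{-1},s^{-2})\,m(ds)<\infty$. (In the paper $\psi$ is the function with $\Psi(\xi)=\psi(\xi^2)$ the L\'evy--Khintchine exponent of a non-trivial L\'evy process.) *)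

theory Defs
  imports "HOL-Analysis.Analysis"
begin

text \<open>Complete Bernstein function on (0,inf):
  f z = c1 + c2 z + (1/pi) int_(0,inf) z/(z+s) m(ds)/s, with c1, c2 \<ge> 0 and m a Borel
  measure on the reals concentrated on (0,inf) with int min(1/s,1/s^2) m(ds) < inf
  (this integrability condition implies that m is Radon on (0,inf)).\<close>
definition complete_bernstein :: "(real \<Rightarrow> real) \<Rightarrow> bool" where
  "complete_bernstein f \<longleftrightarrow>
     (\<exists>c1 c2 (m :: real measure).
        c1 \<ge> 0 \<and> c2 \<ge> 0 \<and> sets m = sets borel \<and> emeasure m {..0} = 0 \<and>
        integrable m (\<lambda>s. min (1 / s) (1 / s\<^sup>2)) \<and>
        (\<forall>z>0. f z = c1 + c2 * z + (1 / pi) * (\<integral>s. z / (z + s) / s \<partial>m)))"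

definition vartheta :: "(real \<Rightarrow> real) \<Rightarrow> real \<Rightarrow> real" where
  "vartheta \<psi> lam = - (1 / pi) *
     (LINT \<zeta>:{0<..}|lborel. lam / (lam\<^sup>2 - \<zeta>\<^sup>2) *
        ln (deriv \<psi> (lam\<^sup>2) * (lam\<^sup>2 - \<zeta>\<^sup>2) / (\<psi> (lam\<^sup>2) - \<psi> (\<zeta>\<^sup>2))))"

end

theory Submission
  imports Defs "HOL-Real_Asymp.Real_Asymp"
begin

(* Write p = \<psi>' and d = -\<psi>''. For a complete Bernstein function 0 \<le> z d(z) \<le> 2 p(z).
   If \<gamma> p \<le> z d \<le> \<beta> p on (0,\<infinity>), then p(z) z^\<beta> is nondecreasing and p(z) z^\<gamma> is
   nonincreasing, so \<psi>(\<zeta>\<^sup>2) - \<psi>(\<lambda>\<^sup>2) is sandwiched between the corresponding increments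
   p(\<lambda>\<^sup>2) \<lambda>\<^sup>2 qlog b (\<zeta>\<^sup>2/\<lambda>\<^sup>2) of the model functions with p(z) z^b constant (b = \<beta>, \<gamma>).
   The integrand of \<vartheta>\<^sub>\<lambda> is monotone in this increment, hence sandwiched between the
   rescaled model kernels K\<^sub>b, whose integral is exact: folding (1,\<infinity>) onto (0,1) by
   t = 1/u turns the integral of K\<^sub>b into -2b times the integral of -ln u / (1 - u\<^sup>2)
   over (0,1), which is \<pi>\<^sup>2/8 by a geometric series and the sum of 1/(2k+1)\<^sup>2. *)

section \<open>The q-logarithm\<close>

text \<open>Tsallis' q-logarithm, the primitive of \<open>y powr (-b)\<close> vanishing at 1:
  \<open>\<psi> x - \<psi> a = \<psi>' a * a * qlog b (x / a)\<close> exactly when \<open>\<psi>' z * z powr b\<close> is constant.\<close>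
definition qlog :: "real \<Rightarrow> real \<Rightarrow> real" where
  "qlog b y = (if b = 1 then ln y else (y powr (1 - b) - 1) / (1 - b))"

lemma qlog_1 [simp]: "qlog b 1 = 0"
  by (simp add: qlog_def)

lemma DERIV_qlog:
  assumes "0 < y"
  shows "(qlog b has_real_derivative y powr (- b)) (at y)"
proof (cases "b = 1")
  case True
  then show ?thesis
    using assms unfolding qlog_def by (auto intro!: derivative_eq_intros simp: powr_minus_divide)
next
  case False
  have "((\<lambda>y. (y powr (1 - b) - 1) / (1 - b)) has_real_derivative
          (1 - b) * y powr (1 - b - 1) / (1 - b)) (at y)"
    using assms by (auto intro!: derivative_eq_intros)
  then show ?thesis
    using False unfolding qlog_def by simp
qed

lemma qlog_measurable [measurable]: "qlog b \<in> borel_measurable borel"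
  unfolding qlog_def by measurable

lemma qlog_inverse:
  assumes "0 < y"
  shows "qlog b (1 / y) = - (y powr (b - 1)) * qlog b y"
proof (cases "b = 1")
  case True
  then show ?thesis using assms by (simp add: qlog_def ln_div)
next
  case False
  have "(1 / y) powr (1 - b) = y powr (b - 1)"
    using assms by (simp add: powr_divide powr_minus_divide[symmetric] minus_diff_eq)
  moreover have "y powr (b - 1) * y powr (1 - b) = 1"
    using assms by (simp add: powr_add[symmetric])
  ultimately show ?thesis
    using False assms unfolding qlog_def by (simp add: field_simps)
qed

lemma qlog_strict_mono:
  assumes "0 < x" "x < y"
  shows "qlog b x < qlog b y"
proof (rule DERIV_pos_imp_increasing_open[OF \<open>x < y\<close>])
  show "\<exists>D. (qlog b has_real_derivative D) (at z) \<and> 0 < D" if "x < z" "z < y" for z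
    using assms that by (intro exI[of _ "z powr (- b)"]) (auto intro: DERIV_qlog)
  show "continuous_on {x..y} (qlog b)"
    using assms by (intro continuous_at_imp_continuous_on) (auto intro: DERIV_isCont[OF DERIV_qlog])
qed

lemma qlog_div_diff_one_pos: "0 < y \<Longrightarrow> y \<noteq> 1 \<Longrightarrow> 0 < qlog b y / (y - 1)"
  using qlog_strict_mono[of y 1 b] qlog_strict_mono[of 1 y b]
  by (cases "y < 1") (auto simp: divide_neg_neg)

lemma DERIV_nonneg_valley:
  fixes f f' :: "real \<Rightarrow> real"
  assumes "0 < a" "f a = 0" "\<And>x. 0 < x \<Longrightarrow> (f has_real_derivative f' x) (at x)"
    and "\<And>x. 0 < x \<Longrightarrow> x \<le> a \<Longrightarrow> f' x \<le> 0" "\<And>x. a \<le> x \<Longrightarrow> 0 \<le> f' x"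
    and "0 < x"
  shows "0 \<le> f x"
proof (cases "x \<le> a")
  case True
  have "f a \<le> f x"
  proof (rule DERIV_nonpos_imp_nonincreasing[OF True])
    fix y assume "x \<le> y" "y \<le> a"
    then show "\<exists>D. (f has_real_derivative D) (at y) \<and> D \<le> 0"
      using assms by (intro exI[of _ "f' y"]) auto
  qed
  then show ?thesis using assms by simp
next
  case False
  have "f a \<le> f x"
  proof (rule DERIV_nonneg_imp_nondecreasing[of a x f])
    show "a \<le> x" using False by simp
    fix y assume "a \<le> y" "y \<le> x"
    then show "\<exists>D. (f has_real_derivative D) (at y) \<and> 0 \<le> D"
      using assms by (intro exI[of _ "f' y"]) auto
  qed
  then show ?thesis using assms by simp
qed

lemma increment_ge_qlog:
  fixes \<psi> p d :: "real \<Rightarrow> real"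
  assumes "0 < a" "0 < x"
    and \<psi>': "\<And>z. 0 < z \<Longrightarrow> (\<psi> has_real_derivative p z) (at z)"
    and p': "\<And>z. 0 < z \<Longrightarrow> (p has_real_derivative - d z) (at z)"
    and elasticity: "\<And>z. 0 < z \<Longrightarrow> z * d z \<le> b * p z"
  shows "p a * a * qlog b (x / a) \<le> \<psi> x - \<psi> a"
proof -
  have weighted_mono: "p u * u powr b \<le> p v * v powr b" if "0 < u" "u \<le> v" for u v
  proof (rule DERIV_nonneg_imp_nondecreasing[OF \<open>u \<le> v\<close>])
    fix y assume "u \<le> y" "y \<le> v"
    with that have y: "0 < y" by simp
    have "((\<lambda>x. p x * x powr b) has_real_derivative
            - d y * y powr b + b * y powr (b - 1) * p y) (at y)"
      using y p'[OF y] by (auto intro!: derivative_eq_intros)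
    moreover have "- d y * y powr b + b * y powr (b - 1) * p y = y powr (b - 1) * (b * p y - y * d y)"
      using y by (simp add: powr_diff field_simps)
    moreover have "0 \<le> y powr (b - 1) * (b * p y - y * d y)"
      using elasticity[OF y] by simp
    ultimately show "\<exists>D. ((\<lambda>x. p x * x powr b) has_real_derivative D) (at y) \<and> 0 \<le> D"
      by auto
  qed
  have scaled: "(y / a) powr (- b) = a powr b / y powr b" if "0 < y" for y
    using that \<open>0 < a\<close> by (simp add: powr_minus powr_divide)
  have "0 \<le> \<psi> x - \<psi> a - p a * a * qlog b (x / a)"
  proof (rule DERIV_nonneg_valley[OF \<open>0 < a\<close> _ _ _ _ \<open>0 < x\<close>])
    show "((\<lambda>x. \<psi> x - \<psi> a - p a * a * qlog b (x / a)) has_real_derivative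
            p y - p a * (y / a) powr (- b)) (at y)" if "0 < y" for y
      using that \<open>0 < a\<close>
      by (auto intro!: derivative_eq_intros \<psi>' DERIV_chain2[OF DERIV_qlog])
    show "p y - p a * (y / a) powr (- b) \<le> 0" if "0 < y" "y \<le> a" for y
      using weighted_mono[OF that] that by (simp add: scaled field_simps)
    show "0 \<le> p y - p a * (y / a) powr (- b)" if "a \<le> y" for y
      using weighted_mono[OF \<open>0 < a\<close> that] that \<open>0 < a\<close> by (simp add: scaled field_simps)
  qed (use \<open>0 < a\<close> in simp)
  then show ?thesis by simp
qed

lemma increment_le_qlog:
  fixes \<psi> p d :: "real \<Rightarrow> real"
  assumes "0 < a" "0 < x"
    and "\<And>z. 0 < z \<Longrightarrow> (\<psi> has_real_derivative p z) (at z)"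
    and "\<And>z. 0 < z \<Longrightarrow> (p has_real_derivative - d z) (at z)"
    and "\<And>z. 0 < z \<Longrightarrow> b * p z \<le> z * d z"
  shows "\<psi> x - \<psi> a \<le> p a * a * qlog b (x / a)"
proof -
  have "- p a * a * qlog b (x / a) \<le> - \<psi> x - - \<psi> a"
    by (rule increment_ge_qlog[of a x "\<lambda>z. - \<psi> z" "\<lambda>z. - p z" "\<lambda>z. - d z" b])
       (use assms in \<open>auto intro!: derivative_eq_intros\<close>)
  then show ?thesis by simp
qed

lemma qlog_le_diff_one: "0 \<le> b \<Longrightarrow> 0 < y \<Longrightarrow> qlog b y \<le> y - 1"
  using increment_ge_qlog[of 1 y "\<lambda>z. z" "\<lambda>_. 1" "\<lambda>_. 0" b]
  by (auto intro: DERIV_ident DERIV_const)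

section \<open>The model kernel and its integral\<close>

text \<open>The integrand of \<open>vartheta\<close> for the model function of \<open>qlog\<close>, in the variable
  \<open>t = \<zeta> / lam\<close>.\<close>
definition qlog_kernel :: "real \<Rightarrow> real \<Rightarrow> real" where
  "qlog_kernel b t = 1 / (t\<^sup>2 - 1) * ln (qlog b (t\<^sup>2) / (t\<^sup>2 - 1))"

lemma qlog_kernel_measurable [measurable]: "qlog_kernel b \<in> borel_measurable borel"
  unfolding qlog_kernel_def by measurable

lemma square_pos_neq_1: "0 < t \<Longrightarrow> t \<noteq> 1 \<Longrightarrow> 0 < (t::real)\<^sup>2 \<and> t\<^sup>2 \<noteq> 1"
  by (auto simp: power2_eq_1_iff)

lemma isCont_qlog_kernel:
  assumes "0 < t" "t \<noteq> 1"
  shows "isCont (qlog_kernel b) t"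
proof -
  have t2: "0 < t\<^sup>2" "t\<^sup>2 \<noteq> 1"
    using square_pos_neq_1[OF assms] by auto
  have "isCont (\<lambda>t. qlog b (t\<^sup>2)) t"
    using continuous_at_compose[of t power2 "qlog b"] DERIV_isCont[OF DERIV_qlog[OF t2(1)]]
    by (simp add: o_def)
  then show ?thesis
    unfolding qlog_kernel_def using t2 qlog_div_diff_one_pos[OF t2, of b]
    by (intro continuous_intros) auto
qed

lemma qlog_kernel_nonpos:
  assumes "0 \<le> b" "0 < t" "t \<noteq> 1"
  shows "qlog_kernel b t \<le> 0"
proof -
  have t2: "0 < t\<^sup>2" "t\<^sup>2 \<noteq> 1"
    using square_pos_neq_1[OF assms(2,3)] by auto
  have pos: "0 < qlog b (t\<^sup>2) / (t\<^sup>2 - 1)"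
    using qlog_div_diff_one_pos[OF t2] .
  have le: "qlog b (t\<^sup>2) \<le> t\<^sup>2 - 1"
    using qlog_le_diff_one[OF assms(1) t2(1)] .
  show ?thesis
  proof (cases "1 < t\<^sup>2")
    case True
    then have "ln (qlog b (t\<^sup>2) / (t\<^sup>2 - 1)) \<le> 0"
      using le pos by simp
    then show ?thesis
      using True unfolding qlog_kernel_def by (simp add: divide_nonpos_pos)
  next
    case False
    with t2 have "t\<^sup>2 < 1" by simp
    then have "1 \<le> qlog b (t\<^sup>2) / (t\<^sup>2 - 1)"
      using le by (simp add: le_divide_eq)
    with \<open>t\<^sup>2 < 1\<close> show ?thesis
      unfolding qlog_kernel_def by (simp add: divide_nonneg_neg)
  qed
qed

text \<open>Under \<open>t = 1/u\<close> the kernel on \<open>(1,\<infinity>)\<close> folds onto \<open>(0,1)\<close>, where the logarithms of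
  the two halves cancel up to \<open>b ln (u\<^sup>2)\<close>.\<close>
lemma qlog_kernel_reflect:
  assumes "0 < u" "u < 1"
  shows "qlog_kernel b u + qlog_kernel b (1 / u) / u\<^sup>2 = 2 * b * ln u / (1 - u\<^sup>2)"
proof -
  define y where "y = u\<^sup>2"
  have y: "0 < y" "y < 1"
    using assms by (auto simp: y_def power_less_one_iff)
  define L where "L = ln (qlog b y / (y - 1))"
  have "qlog b (1 / y) / (1 / y - 1) = y powr b * (qlog b y / (y - 1))"
    using y by (simp add: qlog_inverse powr_diff field_simps)
  moreover have "ln (y powr b * (qlog b y / (y - 1))) = ln (y powr b) + L"
    unfolding L_def using qlog_div_diff_one_pos[of y b] y by (intro ln_mult_pos) auto
  ultimately have "ln (qlog b (1 / y) / (1 / y - 1)) = b * ln y + L"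
    using y by (simp add: ln_powr)
  moreover have "ln y = 2 * ln u"
    using assms by (simp add: y_def ln_realpow)
  moreover have "(1 / u)\<^sup>2 = 1 / y"
    by (simp add: y_def power_divide)
  ultimately have "qlog_kernel b (1 / u) / u\<^sup>2 = (2 * b * ln u + L) / (1 - y)"
    unfolding qlog_kernel_def using y by (simp add: y_def[symmetric] field_simps)
  moreover have "qlog_kernel b u = - L / (1 - y)"
    unfolding qlog_kernel_def L_def y_def[symmetric] using y by (simp add: field_simps)
  ultimately show ?thesis
    by (simp add: y_def diff_divide_distrib[symmetric] add_divide_distrib[symmetric])
qed

lemma DERIV_power_neg_ln_primitive:
  fixes u :: real
  assumes "0 < u"
  shows "((\<lambda>u. u ^ (n + 1) / (real n + 1)\<^sup>2 - u ^ (n + 1) * ln u / (real n + 1))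
           has_real_derivative u ^ n * - ln u) (at u)"
proof -
  define c where "c = real n + 1"
  have "c \<noteq> 0"
    by (simp add: c_def)
  have "((\<lambda>u. u ^ (n + 1)) has_real_derivative c * u ^ n) (at u)"
    using DERIV_pow[of "n + 1" u] by (simp add: c_def add.commute)
  moreover have "(ln has_real_derivative 1 / u) (at u)"
    using assms by (rule DERIV_ln_divide)
  ultimately have "((\<lambda>u. u ^ (n + 1) / c\<^sup>2 - u ^ (n + 1) * ln u / c) has_real_derivative
      c * u ^ n / c\<^sup>2 - (c * u ^ n * ln u + 1 / u * u ^ (n + 1)) / c) (at u)"
    by (intro DERIV_diff DERIV_cdivide DERIV_mult)
  moreover have "c * u ^ n / c\<^sup>2 - (c * u ^ n * ln u + 1 / u * u ^ (n + 1)) / c = u ^ n * - ln u"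
    using assms \<open>c \<noteq> 0\<close> by (simp add: field_simps power2_eq_square)
  ultimately show ?thesis
    by (simp add: c_def)
qed

lemma power_mult_neg_ln_integral:
  fixes n :: nat
  shows "set_integrable lborel {0<..<1} (\<lambda>u::real. u ^ n * - ln u)"
    and "(LINT u:{0<..<1}|lborel. u ^ n * - ln u) = 1 / (real n + 1)\<^sup>2"
proof -
  define c where "c = real n + 1"
  have c: "0 < c" by (simp add: c_def)
  define F where "F u = u ^ (n + 1) / c\<^sup>2 - u ^ (n + 1) * ln u / c" for u :: real
  have F': "DERIV F u :> u ^ n * - ln u" if "0 < ereal u" "ereal u < 1" for u
    using DERIV_power_neg_ln_primitive[of u n] that unfolding F_def c_def by simp
  have F_eq: "F = (\<lambda>u. u ^ (n + 1) / c\<^sup>2 - u ^ n * (u * ln u) / c)"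
    unfolding F_def by (auto simp: algebra_simps)
  have "((\<lambda>u::real. u * ln u) \<longlongrightarrow> 0) (at_right 0)"
    by real_asymp
  then have "(F \<longlongrightarrow> 0 ^ (n + 1) / c\<^sup>2 - 0 ^ n * 0 / c) (at_right 0)"
    unfolding F_eq using c by (intro tendsto_intros) auto
  then have lim0: "((F \<circ> real_of_ereal) \<longlongrightarrow> 0) (at_right 0)"
    unfolding zero_ereal_def ereal_tendsto_simps by simp
  have "isCont F 1"
    unfolding F_def using c by (intro continuous_intros) auto
  then have "(F \<longlongrightarrow> F 1) (at_left 1)"
    by (simp add: isCont_def filterlim_at_split)
  then have lim1: "((F \<circ> real_of_ereal) \<longlongrightarrow> 1 / (real n + 1)\<^sup>2) (at_left 1)"
    unfolding one_ereal_def ereal_tendsto_simps by (simp add: F_def c_def)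
  have cont: "isCont (\<lambda>u. u ^ n * - ln u) u" if "0 < ereal u" "ereal u < 1" for u
    using that by (auto intro!: continuous_intros)
  have nonneg: "AE u in lborel. 0 < ereal u \<longrightarrow> ereal u < 1 \<longrightarrow> 0 \<le> u ^ n * - ln u"
    by (intro AE_I2 impI) (auto intro!: mult_nonneg_nonpos simp: ln_le_zero_iff)
  have "(0::ereal) < 1" by simp
  note FTC = interval_integral_FTC_nonneg[OF this F' cont nonneg lim0 lim1]
  then show "set_integrable lborel {0<..<1} (\<lambda>u::real. u ^ n * - ln u)"
    by (simp add: zero_ereal_def one_ereal_def)
  from FTC show "(LINT u:{0<..<1}|lborel. u ^ n * - ln u) = 1 / (real n + 1)\<^sup>2"
    by (simp add: interval_lebesgue_integral_def zero_ereal_def one_ereal_def)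
qed

lemma odd_inverse_squares_sums: "(\<lambda>k::nat. 1 / (2 * real k + 1)\<^sup>2) sums (pi\<^sup>2 / 8)"
proof -
  have all: "(\<lambda>n::nat. 1 / (real n + 1)\<^sup>2) sums (pi\<^sup>2 / 6)"
    using inverse_squares_sums by (simp add: add.commute)
  have "(\<lambda>n. 1 / (2 * real n + 1)\<^sup>2 + 1 / (2 * real n + 2)\<^sup>2) sums (pi\<^sup>2 / 6)"
    using sums_group[OF all, of 2] by (simp add: mult.commute algebra_simps)
  moreover have "(\<lambda>n. 1 / (2 * real n + 2)\<^sup>2) sums (pi\<^sup>2 / 6 * (1 / 4))"
    using sums_mult2[OF all, of "1 / 4"] by (simp add: field_simps power2_eq_square)
  ultimately show ?thesis
    using sums_diff by fastforce
qed

text \<open>Expand \<open>1/(1 - u\<^sup>2)\<close> as a geometric series and integrate termwise.\<close>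
lemma neg_ln_div_one_minus_square_integral:
  shows "set_integrable lborel {0<..<1} (\<lambda>u::real. - ln u / (1 - u\<^sup>2))"
    and "(LINT u:{0<..<1}|lborel. - ln u / (1 - u\<^sup>2)) = pi\<^sup>2 / 8"
proof -
  define H where "H u = indicator {0<..<1} u * (- ln u / (1 - u\<^sup>2))" for u :: real
  define g where "g k u = indicator {0<..<1} u * (u ^ (2 * k) * - ln u)" for k :: nat and u :: real
  have g_nonneg: "0 \<le> g k u" for k u
    by (auto simp: g_def indicator_def ln_le_zero_iff intro!: mult_nonneg_nonpos)
  have g_integrable: "integrable lborel (g k)" for k
    using power_mult_neg_ln_integral(1)[of "2 * k"] unfolding set_integrable_def g_def by simp
  have "integral\<^sup>L lborel (g k) = 1 / (2 * real k + 1)\<^sup>2" for k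
    using power_mult_neg_ln_integral(2)[of "2 * k"] unfolding set_lebesgue_integral_def g_def by simp
  then have g_nn_integral: "(\<integral>\<^sup>+u. g k u \<partial>lborel) = 1 / (2 * real k + 1)\<^sup>2" for k
    using nn_integral_eq_integral[OF g_integrable] g_nonneg by simp
  have H_suminf: "(\<Sum>k. ennreal (g k u)) = ennreal (H u)" for u
  proof (cases "u \<in> {0<..<1}")
    case True
    then have "(\<lambda>k. (u\<^sup>2) ^ k) sums (1 / (1 - u\<^sup>2))"
      by (intro geometric_sums) (auto simp: abs_square_less_1)
    from sums_mult2[OF this, of "- ln u"] have "(\<lambda>k. g k u) sums H u"
      using True by (simp add: g_def H_def power_mult)
    then show ?thesis
      using g_nonneg by (simp add: suminf_ennreal2 sums_summable sums_unique[symmetric])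
  qed (simp add: g_def H_def)
  have "(\<integral>\<^sup>+u. H u \<partial>lborel) = (\<Sum>k. \<integral>\<^sup>+u. g k u \<partial>lborel)"
    unfolding H_suminf[symmetric] by (rule nn_integral_suminf) (use g_integrable in auto)
  also have "\<dots> = ennreal (pi\<^sup>2 / 8)"
    using odd_inverse_squares_sums
    by (simp add: g_nn_integral suminf_ennreal2 sums_summable sums_unique[symmetric])
  finally have "(\<integral>\<^sup>+u. H u \<partial>lborel) = ennreal (pi\<^sup>2 / 8)" .
  moreover have "H \<in> borel_measurable lborel"
    unfolding H_def by measurable
  moreover have "AE u in lborel. 0 \<le> H u"
    by (intro AE_I2) (auto simp: H_def indicator_def ln_le_zero_iff abs_square_less_1
        intro!: divide_nonpos_pos)
  ultimately have "integrable lborel H" "integral\<^sup>L lborel H = pi\<^sup>2 / 8"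
    using nn_integral_eq_integrable[of H lborel "pi\<^sup>2 / 8"] by auto
  then show "set_integrable lborel {0<..<1} (\<lambda>u::real. - ln u / (1 - u\<^sup>2))"
    and "(LINT u:{0<..<1}|lborel. - ln u / (1 - u\<^sup>2)) = pi\<^sup>2 / 8"
    unfolding H_def set_integrable_def set_lebesgue_integral_def by simp_all
qed

lemma qlog_kernel_unit_interval_integral:
  assumes "0 \<le> b"
  shows "set_integrable lborel {0<..<1} (qlog_kernel b)"
    and "set_integrable lborel {0<..<1} (\<lambda>u. qlog_kernel b (1 / u) / u\<^sup>2)"
    and "(LINT u:{0<..<1}|lborel. qlog_kernel b u)
           + (LINT u:{0<..<1}|lborel. qlog_kernel b (1 / u) / u\<^sup>2) = - (b * pi\<^sup>2 / 4)"
proof -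
  define H where "H u = 2 * b * (- ln u / (1 - u\<^sup>2))" for u :: real
  have H_integrable: "set_integrable lborel {0<..<1} H"
    unfolding H_def by (rule set_integrable_mult_right[OF neg_ln_div_one_minus_square_integral(1)])
  have sum: "qlog_kernel b u + qlog_kernel b (1 / u) / u\<^sup>2 = - H u" if "u \<in> {0<..<1}" for u
    using qlog_kernel_reflect[of u b] that by (simp add: H_def)
  have nonpos: "qlog_kernel b u \<le> 0" "qlog_kernel b (1 / u) / u\<^sup>2 \<le> 0" if "u \<in> {0<..<1}" for u
    using that qlog_kernel_nonpos[OF assms, of u] qlog_kernel_nonpos[OF assms, of "1 / u"]
    by (auto intro: divide_nonpos_pos)
  have dominated: "\<bar>qlog_kernel b u\<bar> \<le> \<bar>H u\<bar>" "\<bar>qlog_kernel b (1 / u) / u\<^sup>2\<bar> \<le> \<bar>H u\<bar>"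
    if "u \<in> {0<..<1}" for u
    using sum[OF that] nonpos[OF that] by (auto simp: abs_if)
  show K_integrable: "set_integrable lborel {0<..<1} (qlog_kernel b)"
    by (rule set_integrable_bound[OF H_integrable])
       (use dominated in \<open>auto simp: set_borel_measurable_def intro!: AE_I2\<close>)
  show K_inv_integrable: "set_integrable lborel {0<..<1} (\<lambda>u. qlog_kernel b (1 / u) / u\<^sup>2)"
    by (rule set_integrable_bound[OF H_integrable])
       (use dominated in \<open>auto simp: set_borel_measurable_def intro!: AE_I2\<close>)
  have "(LINT u:{0<..<1}|lborel. qlog_kernel b u)
          + (LINT u:{0<..<1}|lborel. qlog_kernel b (1 / u) / u\<^sup>2)
        = (LINT u:{0<..<1}|lborel. - H u)"
    using set_integral_add(2)[OF K_integrable K_inv_integrable] sum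
    by (metis (no_types, lifting) set_lebesgue_integral_cong sets_lborel atLeastLessThan_borel
        greaterThanLessThan_borel)
  also have "\<dots> = - (LINT u:{0<..<1}|lborel. H u)"
    by (rule set_integral_uminus[OF H_integrable])
  also have "(LINT u:{0<..<1}|lborel. H u) = 2 * b * (pi\<^sup>2 / 8)"
    unfolding H_def set_integral_mult_right neg_ln_div_one_minus_square_integral(2) ..
  finally show "(LINT u:{0<..<1}|lborel. qlog_kernel b u)
      + (LINT u:{0<..<1}|lborel. qlog_kernel b (1 / u) / u\<^sup>2) = - (b * pi\<^sup>2 / 4)"
    by simp
qed

lemma inverse_substitution_nonneg:
  fixes f :: "real \<Rightarrow> real"
  assumes f_cont: "\<And>t. 1 < t \<Longrightarrow> isCont f t" and f_nonneg: "\<And>t. 1 < t \<Longrightarrow> 0 \<le> f t"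
    and integrable: "set_integrable lborel {0<..<1} (\<lambda>u. f (1 / u) / u\<^sup>2)"
  shows "set_integrable lborel {1<..} f"
    and "(LINT t:{1<..}|lborel. f t) = (LINT u:{0<..<1}|lborel. f (1 / u) / u\<^sup>2)"
proof -
  define g where "g x = - 1 / x" for x :: real
  define g' where "g' x = 1 / x\<^sup>2" for x :: real
  define h where "h x = indicator {-1<..<0} x * (f (g x) * g' x)" for x :: real
  have h_reflect: "h (- x) = indicator {0<..<1} x * (f (1 / x) / x\<^sup>2)" for x
    by (auto simp: h_def g_def g'_def indicator_def)
  have "integrable lborel (\<lambda>x. h (- x))"
    using integrable unfolding h_reflect set_integrable_def by simp
  then have "integrable lborel h"
    using lborel_integrable_real_affine_iff[of "-1" h 0] by simp
  then have h_integrable: "set_integrable lborel (einterval (ereal (-1)) (ereal 0)) (\<lambda>x. f (g x) * g' x)"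
    unfolding h_def set_integrable_def by simp
  have "(\<integral>x. h x \<partial>lborel) = (\<integral>x. h (- x) \<partial>lborel)"
    using lborel_integral_real_affine[of "-1" h 0] by simp
  then have h_integral: "(LBINT x=ereal (-1)..ereal 0. f (g x) * g' x)
      = (LINT u:{0<..<1}|lborel. f (1 / u) / u\<^sup>2)"
    unfolding h_reflect by (simp add: interval_lebesgue_integral_def set_lebesgue_integral_def h_def)
  have g': "DERIV g x :> g' x" if "x < 0" for x
    using that unfolding g_def g'_def by (auto intro!: derivative_eq_intros simp: power2_eq_square)
  have g_gt_1: "1 < g x" if "ereal (-1) < ereal x" "ereal x < ereal 0" for x
    using that by (auto simp: g_def field_simps)
  have "isCont g (-1)"
    unfolding g_def by (intro continuous_intros) auto
  then have "(g \<longlongrightarrow> 1) (at_right (-1))"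
    by (simp add: isCont_def filterlim_at_split g_def)
  then have lim_left: "((ereal \<circ> g \<circ> real_of_ereal) \<longlongrightarrow> ereal 1) (at_right (ereal (-1)))"
    by (simp add: ereal_tendsto_simps o_assoc[symmetric])
  have "filterlim g at_top (at_left 0)"
    unfolding g_def by real_asymp
  then have lim_right: "((ereal \<circ> g \<circ> real_of_ereal) \<longlongrightarrow> \<infinity>) (at_left (ereal 0))"
    unfolding ereal_tendsto_simps1 ereal_tendsto_simps2 .
  have g'_cont: "isCont g' x" if "ereal (-1) < ereal x" "ereal x < ereal 0" for x
    using that unfolding g'_def by (intro continuous_intros) auto
  note substitution = interval_integral_substitution_nonneg[of "ereal (-1)" "ereal 0" g g' f,
      OF _ g' f_cont[OF g_gt_1] g'_cont f_nonneg[OF g_gt_1] _ lim_left lim_right h_integrable]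
  from substitution(1) show "set_integrable lborel {1<..} f"
    by (simp add: g'_def)
  from substitution(2) show "(LINT t:{1<..}|lborel. f t) = (LINT u:{0<..<1}|lborel. f (1 / u) / u\<^sup>2)"
    unfolding h_integral[symmetric] by (simp add: g'_def interval_lebesgue_integral_def)
qed

lemma qlog_kernel_tail_integral:
  assumes "0 \<le> b"
  shows "set_integrable lborel {1<..} (qlog_kernel b)"
    and "(LINT t:{1<..}|lborel. qlog_kernel b t)
           = (LINT u:{0<..<1}|lborel. qlog_kernel b (1 / u) / u\<^sup>2)"
proof -
  note substitution = inverse_substitution_nonneg[of "\<lambda>t. - qlog_kernel b t"]
  have "set_integrable lborel {0<..<1} (\<lambda>u. - qlog_kernel b (1 / u) / u\<^sup>2)"
    using qlog_kernel_unit_interval_integral(2)[OF assms] by (simp add: set_integrable_def)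
  moreover have "isCont (\<lambda>t. - qlog_kernel b t) t" "0 \<le> - qlog_kernel b t" if "1 < t" for t
    using that isCont_qlog_kernel[of t b] qlog_kernel_nonpos[OF assms, of t] by auto
  ultimately show "set_integrable lborel {1<..} (qlog_kernel b)"
    and "(LINT t:{1<..}|lborel. qlog_kernel b t)
           = (LINT u:{0<..<1}|lborel. qlog_kernel b (1 / u) / u\<^sup>2)"
    using substitution by (auto simp: set_integrable_def set_lebesgue_integral_def)
qed

lemma qlog_kernel_integral:
  assumes "0 \<le> b"
  shows "set_integrable lborel {0<..} (qlog_kernel b)"
    and "(LINT t:{0<..}|lborel. qlog_kernel b t) = - (b * pi\<^sup>2 / 4)"
proof -
  have split: "AE t::real in lborel. t \<in> {0<..<1} \<union> {1<..} \<longleftrightarrow> t \<in> {0<..}"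
    by (rule eventually_mono[OF AE_lborel_singleton[of 1]]) auto
  have K_integrable: "set_integrable lborel ({0<..<1} \<union> {1<..}) (qlog_kernel b)"
    using qlog_kernel_unit_interval_integral(1) qlog_kernel_tail_integral(1) assms
    by (intro set_integrable_Un) auto
  then show "set_integrable lborel {0<..} (qlog_kernel b)"
    unfolding set_integrable_def
    by (rule integrable_cong_AE_imp) (use split in \<open>auto split: split_indicator\<close>)
  have "(LINT t:{0<..}|lborel. qlog_kernel b t)
      = (LINT t:{0<..<1} \<union> {1<..}|lborel. qlog_kernel b t)"
    using split K_integrable
    by (intro set_integral_cong_set) (auto simp: set_borel_measurable_def)
  also have "\<dots> = (LINT t:{0<..<1}|lborel. qlog_kernel b t) + (LINT t:{1<..}|lborel. qlog_kernel b t)"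
    using qlog_kernel_unit_interval_integral(1) qlog_kernel_tail_integral(1) assms
    by (intro set_integral_Un) auto
  also have "\<dots> = - (b * pi\<^sup>2 / 4)"
    using qlog_kernel_unit_interval_integral(3) qlog_kernel_tail_integral(2) assms by simp
  finally show "(LINT t:{0<..}|lborel. qlog_kernel b t) = - (b * pi\<^sup>2 / 4)" .
qed

lemma qlog_kernel_scaled_integral:
  assumes "0 \<le> b" "0 < lam"
  shows "set_integrable lborel {0<..} (\<lambda>\<zeta>. qlog_kernel b (\<zeta> / lam) / lam)"
    and "(LINT \<zeta>:{0<..}|lborel. qlog_kernel b (\<zeta> / lam) / lam) = - (b * pi\<^sup>2 / 4)"
proof -
  define f where "f \<zeta> = indicator {0<..} \<zeta> * (qlog_kernel b (\<zeta> / lam) / lam)" for \<zeta> :: real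
  have f_scaled: "f (0 + lam * x) = indicator {0<..} x * qlog_kernel b x / lam" for x
    using assms by (simp add: f_def indicator_def zero_less_mult_iff)
  have "integrable lborel (\<lambda>x. indicator {0<..} x * qlog_kernel b x / lam)"
    using qlog_kernel_integral(1)[OF assms(1)] by (simp add: set_integrable_def)
  then have "integrable lborel f"
    using lborel_integrable_real_affine_iff[of lam f 0] assms unfolding f_scaled by simp
  then show "set_integrable lborel {0<..} (\<lambda>\<zeta>. qlog_kernel b (\<zeta> / lam) / lam)"
    unfolding f_def set_integrable_def by simp
  have "(\<integral>\<zeta>. f \<zeta> \<partial>lborel) = lam * (\<integral>x. f (0 + lam * x) \<partial>lborel)"
    using lborel_integral_real_affine[of lam f 0] assms by simp
  also have "\<dots> = (LINT x:{0<..}|lborel. qlog_kernel b x)"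
    unfolding f_scaled using assms by (simp add: set_lebesgue_integral_def)
  finally show "(LINT \<zeta>:{0<..}|lborel. qlog_kernel b (\<zeta> / lam) / lam) = - (b * pi\<^sup>2 / 4)"
    using qlog_kernel_integral(2)[OF assms(1)] by (simp add: f_def set_lebesgue_integral_def)
qed

section \<open>Complete Bernstein functions\<close>

lemma has_real_derivative_integral:
  fixes m :: "'a measure" and F Q :: "real \<Rightarrow> 'a \<Rightarrow> real" and G :: "'a \<Rightarrow> real"
  assumes "0 < r"
    and AE_S: "AE s in m. s \<in> S"
    and F_integrable: "\<And>w. dist w z < r \<Longrightarrow> integrable m (F w)"
    and quotient: "\<And>w s. dist w z < r \<Longrightarrow> w \<noteq> z \<Longrightarrow> s \<in> S \<Longrightarrow> (F w s - F z s) / (w - z) = Q w s"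
    and Q_cont: "\<And>s. s \<in> S \<Longrightarrow> ((\<lambda>w. Q w s) \<longlongrightarrow> Q z s) (at z)"
    and Q_measurable: "\<And>w. Q w \<in> borel_measurable m"
    and "integrable m G"
    and Q_bound: "\<And>w s. dist w z < r \<Longrightarrow> s \<in> S \<Longrightarrow> \<bar>Q w s\<bar> \<le> G s"
  shows "((\<lambda>w. \<integral>s. F w s \<partial>m) has_real_derivative (\<integral>s. Q z s \<partial>m)) (at z)"
proof -
  have "((\<lambda>w. \<integral>s. Q w s \<partial>m) \<longlongrightarrow> (\<integral>s. Q z s \<partial>m)) (at z within ball z r)"
    unfolding tendsto_at_iff_sequentially
  proof (intro allI impI)
    fix X :: "nat \<Rightarrow> real"
    assume X: "\<forall>i. X i \<in> ball z r - {z}" and "X \<longlonglongrightarrow> z"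
    then have X_at: "filterlim X (at z) sequentially"
      by (auto simp: filterlim_at)
    show "((\<lambda>w. \<integral>s. Q w s \<partial>m) \<circ> X) \<longlonglongrightarrow> (\<integral>s. Q z s \<partial>m)"
      unfolding o_def
    proof (rule integral_dominated_convergence[where w = G])
      show "AE s in m. (\<lambda>i. Q (X i) s) \<longlonglongrightarrow> Q z s"
        using AE_S by eventually_elim (rule filterlim_compose[OF Q_cont X_at])
      show "AE s in m. norm (Q (X i) s) \<le> G s" for i
        using AE_S by eventually_elim (use X in \<open>auto intro: Q_bound simp: dist_commute\<close>)
    qed (use Q_measurable \<open>integrable m G\<close> in auto)
  qed
  then have Q_lim: "((\<lambda>w. \<integral>s. Q w s \<partial>m) \<longlongrightarrow> (\<integral>s. Q z s \<partial>m)) (at z)"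
    using at_within_open[of z "ball z r"] \<open>0 < r\<close> by simp
  have "\<forall>\<^sub>F w in at z. w \<in> ball z r"
    using \<open>0 < r\<close> by (intro eventually_at_in_open') auto
  moreover have "\<forall>\<^sub>F w in at z. w \<noteq> z"
    by (rule eventually_at_filter[THEN iffD2]) simp
  ultimately have "\<forall>\<^sub>F w in at z. (\<integral>s. Q w s \<partial>m) = ((\<integral>s. F w s \<partial>m) - (\<integral>s. F z s \<partial>m)) / (w - z)"
  proof eventually_elim
    case (elim w)
    then have w: "dist w z < r" "w \<noteq> z"
      by (auto simp: dist_commute)
    have z: "dist z z < r"
      using \<open>0 < r\<close> by simp
    have "((\<integral>s. F w s \<partial>m) - (\<integral>s. F z s \<partial>m)) / (w - z) = (\<integral>s. (F w s - F z s) / (w - z) \<partial>m)"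
      using F_integrable[OF w(1)] F_integrable[OF z] by simp
    also have "\<dots> = (\<integral>s. Q w s \<partial>m)"
    proof (rule integral_cong_AE)
      show "AE s in m. (F w s - F z s) / (w - z) = Q w s"
        using AE_S by eventually_elim (rule quotient[OF w])
    qed (use F_integrable[OF w(1)] F_integrable[OF z] Q_measurable in auto)
    finally show ?case by simp
  qed
  with Q_lim show ?thesis
    unfolding has_field_derivative_iff by (rule Lim_transform_eventually)
qed

lemma min_inverse_square_eq:
  "0 < s \<Longrightarrow> min (1 / s) (1 / s\<^sup>2) = (if s \<le> 1 then 1 / s else 1 / (s::real)\<^sup>2)"
  by (auto simp: min_def field_simps power2_eq_square intro: mult_left_le_one_le)

lemma bernstein_kernel_bound:
  fixes z s :: real
  assumes "0 < z" "0 < s"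
  shows "\<bar>z / (z + s) / s\<bar> \<le> (1 + z) * min (1 / s) (1 / s\<^sup>2)"
proof (cases "s \<le> 1")
  case True
  have "z / (z + s) / s \<le> 1 / s"
    using assms by (intro divide_right_mono) auto
  also have "\<dots> \<le> (1 + z) * (1 / s)"
    using assms by (simp add: field_simps)
  finally show ?thesis
    using assms True by (simp add: min_inverse_square_eq)
next
  case False
  have "z / (z + s) / s \<le> z / s / s"
    using assms by (intro divide_right_mono divide_left_mono) auto
  also have "\<dots> \<le> (1 + z) * (1 / s\<^sup>2)"
    using assms by (simp add: field_simps power2_eq_square)
  finally show ?thesis
    using assms False by (simp add: min_inverse_square_eq)
qed

lemma inverse_square_shift_bound:
  fixes h s :: real
  assumes "0 < h" "0 < s"
  shows "1 / (h + s)\<^sup>2 \<le> (1 + 1 / h\<^sup>2) * min (1 / s) (1 / s\<^sup>2)"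
proof (cases "s \<le> 1")
  case True
  have "1 / (h + s)\<^sup>2 \<le> 1 / h\<^sup>2"
    using assms by (intro divide_left_mono power_mono) auto
  also have "\<dots> \<le> 1 / h\<^sup>2 * (1 / s)"
    using assms True by (simp add: field_simps)
  also have "\<dots> \<le> (1 + 1 / h\<^sup>2) * (1 / s)"
    using assms by (intro mult_right_mono) auto
  finally show ?thesis
    using assms True by (simp add: min_inverse_square_eq)
next
  case False
  have "1 / (h + s)\<^sup>2 \<le> 1 / s\<^sup>2"
    using assms by (intro divide_left_mono power_mono) auto
  also have "\<dots> \<le> (1 + 1 / h\<^sup>2) * (1 / s\<^sup>2)"
    using assms by (simp add: field_simps)
  finally show ?thesis
    using assms False by (simp add: min_inverse_square_eq)
qed

lemma inverse_cube_le:
  fixes z s :: real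
  assumes "0 < z" "0 < s"
  shows "1 / (z + s) ^ 3 \<le> 1 / z * (1 / (z + s)\<^sup>2)"
proof -
  have "1 / (z + s) ^ 3 = 1 / (z + s) * (1 / (z + s)\<^sup>2)"
    by (simp add: power2_eq_square power3_eq_cube)
  also have "\<dots> \<le> 1 / z * (1 / (z + s)\<^sup>2)"
    using assms by (intro mult_right_mono divide_left_mono) auto
  finally show ?thesis .
qed

lemma inverse_square_quotient_bound:
  fixes h s A B :: real
  assumes "0 < h" "0 < s" "h + s \<le> A" "h + s \<le> B"
  shows "\<bar>- (A + B) / (A\<^sup>2 * B\<^sup>2)\<bar> \<le> 2 / h * ((1 + 1 / h\<^sup>2) * min (1 / s) (1 / s\<^sup>2))"
proof -
  have "\<bar>- (A + B) / (A\<^sup>2 * B\<^sup>2)\<bar> = 1 / (A * B\<^sup>2) + 1 / (A\<^sup>2 * B)"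
    using assms by (simp add: divide_simps) (simp add: algebra_simps power2_eq_square)
  also have "\<dots> \<le> 1 / ((h + s) * (h + s)\<^sup>2) + 1 / ((h + s)\<^sup>2 * (h + s))"
    using assms by (intro add_mono divide_left_mono mult_mono power_mono mult_pos_pos) auto
  also have "\<dots> = 2 / (h + s) * (1 / (h + s)\<^sup>2)"
    by (simp add: field_simps)
  also have "\<dots> \<le> 2 / h * ((1 + 1 / h\<^sup>2) * min (1 / s) (1 / s\<^sup>2))"
    using assms by (intro mult_mono divide_left_mono inverse_square_shift_bound) auto
  finally show ?thesis .
qed

locale bernstein_measure =
  fixes m :: "real measure"
  assumes sets_eq: "sets m = sets borel"
    and nonpos_null: "emeasure m {..0} = 0"
    and integrable_min: "integrable m (\<lambda>s. min (1 / s) (1 / s\<^sup>2))"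
begin

lemma borel_measurable_eq: "borel_measurable m = borel_measurable borel"
  by (rule measurable_cong_sets[OF sets_eq refl])

lemma AE_pos: "AE s in m. 0 < s"
proof (rule AE_I'[of "{..0}"])
  show "{..0} \<in> null_sets m"
    using nonpos_null sets_eq by (auto simp: null_sets_def)
qed auto

lemma integrable_if_min_bound:
  assumes "f \<in> borel_measurable borel" "\<And>s. 0 < s \<Longrightarrow> \<bar>f s\<bar> \<le> C * min (1 / s) (1 / s\<^sup>2)"
  shows "integrable m f"
proof (rule Bochner_Integration.integrable_bound)
  show "integrable m (\<lambda>s. C * min (1 / s) (1 / s\<^sup>2))"
    using integrable_min by simp
  show "AE s in m. norm (f s) \<le> norm (C * min (1 / s) (1 / s\<^sup>2))"
    using AE_pos by eventually_elim (use assms(2) in force)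
qed (use assms(1) in \<open>simp add: borel_measurable_eq\<close>)

lemma integrable_bernstein_kernel:
  assumes "0 < z"
  shows "integrable m (\<lambda>s. z / (z + s) / s)"
proof (rule integrable_if_min_bound[where C = "1 + z"])
  show "\<bar>z / (z + s) / s\<bar> \<le> (1 + z) * min (1 / s) (1 / s\<^sup>2)" if "0 < s" for s
    using bernstein_kernel_bound[OF assms that] .
qed simp

lemma integrable_inverse_square:
  assumes "0 < z"
  shows "integrable m (\<lambda>s. 1 / (z + s)\<^sup>2)"
proof (rule integrable_if_min_bound[where C = "1 + 1 / z\<^sup>2"])
  show "\<bar>1 / (z + s)\<^sup>2\<bar> \<le> (1 + 1 / z\<^sup>2) * min (1 / s) (1 / s\<^sup>2)" if "0 < s" for s
    using inverse_square_shift_bound[OF assms that] by simp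
qed simp

lemma integrable_inverse_cube:
  assumes "0 < z"
  shows "integrable m (\<lambda>s. 1 / (z + s) ^ 3)"
proof (rule integrable_if_min_bound[where C = "1 / z * (1 + 1 / z\<^sup>2)"])
  fix s :: real assume "0 < s"
  have "\<bar>1 / (z + s) ^ 3\<bar> \<le> 1 / z * (1 / (z + s)\<^sup>2)"
    using inverse_cube_le[OF assms \<open>0 < s\<close>] assms \<open>0 < s\<close> by simp
  also have "\<dots> \<le> 1 / z * ((1 + 1 / z\<^sup>2) * min (1 / s) (1 / s\<^sup>2))"
    using assms \<open>0 < s\<close> by (intro mult_left_mono inverse_square_shift_bound) auto
  finally show "\<bar>1 / (z + s) ^ 3\<bar> \<le> 1 / z * (1 + 1 / z\<^sup>2) * min (1 / s) (1 / s\<^sup>2)"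
    by (simp add: mult.assoc)
qed simp

lemma DERIV_bernstein_kernel_integral:
  assumes "0 < z"
  shows "((\<lambda>z. \<integral>s. z / (z + s) / s \<partial>m) has_real_derivative (\<integral>s. 1 / (z + s)\<^sup>2 \<partial>m)) (at z)"
proof -
  define h where "h = z / 2"
  have h_pos: "0 < h"
    using assms by (simp add: h_def)
  have h_le: "h \<le> w" if "dist w z < z / 2" for w
    using that abs_ge_minus_self[of "w - z"] by (simp add: h_def dist_real_def)
  have "((\<lambda>w. \<integral>s. w / (w + s) / s \<partial>m) has_real_derivative (\<integral>s. 1 / ((z + s) * (z + s)) \<partial>m)) (at z)"
  proof (rule has_real_derivative_integral[where r = "z / 2" and S = "{0<..}"
        and Q = "\<lambda>w s. 1 / ((z + s) * (w + s))" and G = "\<lambda>s. (1 + 1 / h\<^sup>2) * min (1 / s) (1 / s\<^sup>2)"])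
    show "integrable m (\<lambda>s. w / (w + s) / s)" if "dist w z < z / 2" for w
      using h_pos h_le[OF that] by (intro integrable_bernstein_kernel) simp
    show "(w / (w + s) / s - z / (z + s) / s) / (w - z) = 1 / ((z + s) * (w + s))"
      if "dist w z < z / 2" "w \<noteq> z" "s \<in> {0<..}" for w s
    proof -
      have "0 < w + s" "0 < z + s" "0 < s"
        using h_pos h_le[OF that(1)] that(3) assms by auto
      then show ?thesis
        using that(2) by (simp add: divide_simps) (simp add: algebra_simps)
    qed
    show "\<bar>1 / ((z + s) * (w + s))\<bar> \<le> (1 + 1 / h\<^sup>2) * min (1 / s) (1 / s\<^sup>2)"
      if "dist w z < z / 2" "s \<in> {0<..}" for w s
    proof -
      have "\<bar>1 / ((z + s) * (w + s))\<bar> \<le> 1 / (h + s)\<^sup>2"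
        using h_pos h_le[OF that(1)] that(2) assms
        by (auto simp: h_def power2_eq_square intro!: divide_left_mono mult_mono)
      also have "\<dots> \<le> (1 + 1 / h\<^sup>2) * min (1 / s) (1 / s\<^sup>2)"
        using inverse_square_shift_bound h_pos that(2) by simp
      finally show ?thesis .
    qed
  qed (use assms AE_pos integrable_min in \<open>auto intro!: tendsto_intros simp: borel_measurable_eq\<close>)
  then show ?thesis
    by (simp add: power2_eq_square)
qed

lemma DERIV_inverse_square_integral:
  assumes "0 < z"
  shows "((\<lambda>z. \<integral>s. 1 / (z + s)\<^sup>2 \<partial>m) has_real_derivative - 2 * (\<integral>s. 1 / (z + s) ^ 3 \<partial>m)) (at z)"
proof -
  define h where "h = z / 2"
  have h_pos: "0 < h"
    using assms by (simp add: h_def)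
  have h_le: "h \<le> w" if "dist w z < z / 2" for w
    using that abs_ge_minus_self[of "w - z"] by (simp add: h_def dist_real_def)
  define Q where "Q w s = - ((w + s) + (z + s)) / ((w + s)\<^sup>2 * (z + s)\<^sup>2)" for w s :: real
  have "((\<lambda>w. \<integral>s. 1 / (w + s)\<^sup>2 \<partial>m) has_real_derivative (\<integral>s. Q z s \<partial>m)) (at z)"
  proof (rule has_real_derivative_integral[where r = "z / 2" and S = "{0<..}" and Q = Q
        and G = "\<lambda>s. 2 / h * ((1 + 1 / h\<^sup>2) * min (1 / s) (1 / s\<^sup>2))"])
    show "integrable m (\<lambda>s. 1 / (w + s)\<^sup>2)" if "dist w z < z / 2" for w
      using h_pos h_le[OF that] by (intro integrable_inverse_square) simp
    show "(1 / (w + s)\<^sup>2 - 1 / (z + s)\<^sup>2) / (w - z) = Q w s"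
      if "dist w z < z / 2" "w \<noteq> z" "s \<in> {0<..}" for w s
    proof -
      have "0 < w + s" "0 < z + s"
        using h_pos h_le[OF that(1)] that(3) assms by auto
      then show ?thesis
        using that(2) unfolding Q_def
        by (simp add: divide_simps) (simp add: algebra_simps power2_eq_square)
    qed
    show "\<bar>Q w s\<bar> \<le> 2 / h * ((1 + 1 / h\<^sup>2) * min (1 / s) (1 / s\<^sup>2))"
      if "dist w z < z / 2" "s \<in> {0<..}" for w s
      unfolding Q_def using h_pos h_le[OF that(1)] that(2)
      by (intro inverse_square_quotient_bound) (auto simp: h_def)
    show "((\<lambda>w. Q w s) \<longlongrightarrow> Q z s) (at z)" if "s \<in> {0<..}" for s
      unfolding Q_def using that assms by (intro tendsto_intros) auto
    show "Q w \<in> borel_measurable m" for w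
      unfolding Q_def borel_measurable_eq by measurable
  qed (use assms AE_pos integrable_min in auto)
  moreover have "(\<integral>s. Q z s \<partial>m) = (\<integral>s. - 2 * (1 / (z + s) ^ 3) \<partial>m)"
  proof (rule integral_cong_AE)
    have Q_diag: "- (A + A) / (A\<^sup>2 * A\<^sup>2) = - 2 * (1 / A ^ 3)" if "0 < A" for A :: real
      using that by (simp add: field_simps power2_eq_square power3_eq_cube)
    show "AE s in m. Q z s = - 2 * (1 / (z + s) ^ 3)"
      using AE_pos by eventually_elim (unfold Q_def, rule Q_diag, use assms in auto)
  qed (auto simp: Q_def borel_measurable_eq)
  moreover have "(\<integral>s. - 2 * (1 / (z + s) ^ 3) \<partial>m) = - 2 * (\<integral>s. 1 / (z + s) ^ 3 \<partial>m)"
    by (rule integral_mult_right_zero)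
  ultimately show ?thesis
    by (simp only:)
qed

lemma inverse_square_integral_nonneg: "0 \<le> (\<integral>s. 1 / (z + s)\<^sup>2 \<partial>m)"
  by (intro integral_nonneg_AE) auto

lemma inverse_cube_integral_nonneg: "0 < z \<Longrightarrow> 0 \<le> (\<integral>s. 1 / (z + s) ^ 3 \<partial>m)"
  by (intro integral_nonneg_AE, use AE_pos in eventually_elim) auto

lemma mult_inverse_cube_integral_le:
  assumes "0 < z"
  shows "z * (\<integral>s. 1 / (z + s) ^ 3 \<partial>m) \<le> (\<integral>s. 1 / (z + s)\<^sup>2 \<partial>m)"
proof -
  have "z * (\<integral>s. 1 / (z + s) ^ 3 \<partial>m) = (\<integral>s. z * (1 / (z + s) ^ 3) \<partial>m)"
    by (rule integral_mult_right_zero[symmetric])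
  also have "\<dots> \<le> (\<integral>s. 1 / (z + s)\<^sup>2 \<partial>m)"
  proof (rule integral_mono_AE)
    show "AE s in m. z * (1 / (z + s) ^ 3) \<le> 1 / (z + s)\<^sup>2"
      using AE_pos
    proof eventually_elim
      case (elim s)
      have "z * (1 / (z + s) ^ 3) \<le> z * (1 / z * (1 / (z + s)\<^sup>2))"
        using inverse_cube_le[OF assms elim] assms by (intro mult_left_mono) auto
      then show ?case
        using assms by simp
    qed
  qed (use integrable_mult_right[OF integrable_inverse_cube[OF assms], of z]
        integrable_inverse_square[OF assms] in auto)
  finally show ?thesis .
qed

lemma inverse_power_integrals_eq_0:
  assumes "0 < z0" "(\<integral>s. 1 / (z0 + s)\<^sup>2 \<partial>m) = 0"
  shows "(\<integral>s. 1 / (z + s)\<^sup>2 \<partial>m) = 0" and "(\<integral>s. 1 / (z + s) ^ 3 \<partial>m) = 0"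
proof -
  have "AE s in m. 1 / (z0 + s)\<^sup>2 = 0"
    using assms(2) integrable_inverse_square[OF assms(1)]
    by (subst (asm) integral_nonneg_eq_0_iff_AE) auto
  with AE_pos have "AE s in m. False"
    by eventually_elim (use assms(1) in auto)
  have vanish: "(\<integral>s. f s \<partial>m) = 0" if "f \<in> borel_measurable borel" for f
  proof -
    have "(\<integral>s. f s \<partial>m) = (\<integral>s. 0 \<partial>m)"
      using \<open>AE s in m. False\<close> that
      by (intro integral_cong_AE) (auto simp: borel_measurable_eq elim: AE_mp)
    then show ?thesis
      by simp
  qed
  show "(\<integral>s. 1 / (z + s)\<^sup>2 \<partial>m) = 0"
    by (rule vanish) measurable
  show "(\<integral>s. 1 / (z + s) ^ 3 \<partial>m) = 0"
    by (rule vanish) measurable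
qed

end

lemma complete_bernstein_derivatives:
  assumes "complete_bernstein \<psi>"
  obtains p d :: "real \<Rightarrow> real" where
    "\<And>z. 0 < z \<Longrightarrow> (\<psi> has_real_derivative p z) (at z)"
    "\<And>z. 0 < z \<Longrightarrow> (p has_real_derivative - d z) (at z)"
    "\<And>z. 0 < z \<Longrightarrow> 0 \<le> d z"
    "\<And>z. 0 < z \<Longrightarrow> z * d z \<le> 2 * p z"
    "(\<forall>z>0. 0 < p z) \<or> (\<forall>z>0. p z = 0 \<and> d z = 0)"
proof -
  obtain c1 c2 m where "0 \<le> c2" "bernstein_measure m"
    and \<psi>_eq: "\<And>z. 0 < z \<Longrightarrow> \<psi> z = c1 + c2 * z + 1 / pi * (\<integral>s. z / (z + s) / s \<partial>m)"
    using assms unfolding complete_bernstein_def bernstein_measure_def by blast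
  interpret bernstein_measure m by fact
  define p where "p z = c2 + (\<integral>s. 1 / (z + s)\<^sup>2 \<partial>m) / pi" for z
  define d where "d z = 2 * (\<integral>s. 1 / (z + s) ^ 3 \<partial>m) / pi" for z
  have \<psi>': "(\<psi> has_real_derivative p z) (at z)" if "0 < z" for z
  proof (rule has_field_derivative_transform_within_open[where S = "{0<..}"])
    show "((\<lambda>z. c1 + c2 * z + 1 / pi * (\<integral>s. z / (z + s) / s \<partial>m)) has_real_derivative p z) (at z)"
      using DERIV_bernstein_kernel_integral[OF that] unfolding p_def by (auto intro!: derivative_eq_intros)
  qed (use that \<psi>_eq in auto)
  have p': "(p has_real_derivative - d z) (at z)" if "0 < z" for z
    using DERIV_inverse_square_integral[OF that] unfolding p_def[abs_def] d_def
    by (auto intro!: derivative_eq_intros)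
  have d_nonneg: "0 \<le> d z" if "0 < z" for z
    using inverse_cube_integral_nonneg[OF that] by (simp add: d_def)
  have elasticity_le_2: "z * d z \<le> 2 * p z" if "0 < z" for z
  proof -
    have "z * d z = 2 * (z * (\<integral>s. 1 / (z + s) ^ 3 \<partial>m)) / pi"
      by (simp add: d_def)
    also have "\<dots> \<le> 2 * (\<integral>s. 1 / (z + s)\<^sup>2 \<partial>m) / pi"
      using mult_inverse_cube_integral_le[OF that] by (simp add: divide_right_mono)
    also have "\<dots> \<le> 2 * p z"
      using \<open>0 \<le> c2\<close> by (simp add: p_def)
    finally show ?thesis .
  qed
  have degenerate: "\<forall>z>0. p z = 0 \<and> d z = 0" if "\<not> (\<forall>z>0. 0 < p z)"
  proof -
    from that obtain z0 where "0 < z0" "p z0 \<le> 0"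
      by (auto simp: not_less)
    moreover have "0 \<le> (\<integral>s. 1 / (z0 + s)\<^sup>2 \<partial>m) / pi"
      using inverse_square_integral_nonneg by simp
    ultimately have "c2 = 0" "(\<integral>s. 1 / (z0 + s)\<^sup>2 \<partial>m) / pi = 0"
      using \<open>0 \<le> c2\<close> unfolding p_def by linarith+
    then have "c2 = 0" "(\<integral>s. 1 / (z0 + s)\<^sup>2 \<partial>m) = 0"
      by simp_all
    note inverse_power_integrals_eq_0[OF \<open>0 < z0\<close> this(2)]
    with \<open>c2 = 0\<close> show ?thesis
      by (simp add: p_def d_def)
  qed
  show thesis
    using that[OF \<psi>' p' d_nonneg elasticity_le_2] degenerate by blast
qed

section \<open>Bounds for \<open>vartheta\<close>\<close>

definition vartheta_integrand :: "(real \<Rightarrow> real) \<Rightarrow> real \<Rightarrow> real \<Rightarrow> real" where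
  "vartheta_integrand \<psi> lam \<zeta> =
     lam / (lam\<^sup>2 - \<zeta>\<^sup>2) * ln (deriv \<psi> (lam\<^sup>2) * (lam\<^sup>2 - \<zeta>\<^sup>2) / (\<psi> (lam\<^sup>2) - \<psi> (\<zeta>\<^sup>2)))"

lemma vartheta_eq_integral:
  "vartheta \<psi> lam = - (1 / pi) * (LINT \<zeta>:{0<..}|lborel. vartheta_integrand \<psi> lam \<zeta>)"
  unfolding vartheta_def vartheta_integrand_def ..

lemma vartheta_integrand_eq:
  "vartheta_integrand \<psi> lam \<zeta> =
     lam / (\<zeta>\<^sup>2 - lam\<^sup>2) * ln ((\<psi> (\<zeta>\<^sup>2) - \<psi> (lam\<^sup>2)) / (deriv \<psi> (lam\<^sup>2) * (\<zeta>\<^sup>2 - lam\<^sup>2)))"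
proof -
  define y where "y = (\<psi> (\<zeta>\<^sup>2) - \<psi> (lam\<^sup>2)) / (deriv \<psi> (lam\<^sup>2) * (\<zeta>\<^sup>2 - lam\<^sup>2))"
  have flip: "deriv \<psi> (lam\<^sup>2) * (lam\<^sup>2 - \<zeta>\<^sup>2) = - (deriv \<psi> (lam\<^sup>2) * (\<zeta>\<^sup>2 - lam\<^sup>2))"
    "\<psi> (lam\<^sup>2) - \<psi> (\<zeta>\<^sup>2) = - (\<psi> (\<zeta>\<^sup>2) - \<psi> (lam\<^sup>2))"
    by (simp_all add: algebra_simps)
  have "deriv \<psi> (lam\<^sup>2) * (lam\<^sup>2 - \<zeta>\<^sup>2) / (\<psi> (lam\<^sup>2) - \<psi> (\<zeta>\<^sup>2)) = inverse y"
    unfolding y_def flip minus_divide_divide by (simp add: inverse_divide)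
  moreover have "lam / (lam\<^sup>2 - \<zeta>\<^sup>2) = - (lam / (\<zeta>\<^sup>2 - lam\<^sup>2))"
    by (simp add: minus_divide_right)
  ultimately show ?thesis
    unfolding vartheta_integrand_def y_def[symmetric] by (simp add: ln_inverse)
qed

lemma qlog_kernel_scaled_eq:
  assumes "0 < lam" "0 < \<zeta>" "\<zeta> \<noteq> lam" "c \<noteq> 0"
  shows "qlog_kernel b (\<zeta> / lam) / lam =
           lam / (\<zeta>\<^sup>2 - lam\<^sup>2) * ln (c * lam\<^sup>2 * qlog b (\<zeta>\<^sup>2 / lam\<^sup>2) / (c * (\<zeta>\<^sup>2 - lam\<^sup>2)))"
proof -
  have "\<zeta>\<^sup>2 - lam\<^sup>2 \<noteq> 0"
    using assms by (auto simp: power2_eq_iff)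
  then have "qlog b (\<zeta>\<^sup>2 / lam\<^sup>2) / (\<zeta>\<^sup>2 / lam\<^sup>2 - 1)
        = c * lam\<^sup>2 * qlog b (\<zeta>\<^sup>2 / lam\<^sup>2) / (c * (\<zeta>\<^sup>2 - lam\<^sup>2))"
    and "1 / (\<zeta>\<^sup>2 / lam\<^sup>2 - 1) / lam = lam / (\<zeta>\<^sup>2 - lam\<^sup>2)"
    using assms by (simp_all add: field_simps power2_eq_square)
  moreover have "qlog_kernel b (\<zeta> / lam) / lam
      = 1 / (\<zeta>\<^sup>2 / lam\<^sup>2 - 1) / lam * ln (qlog b (\<zeta>\<^sup>2 / lam\<^sup>2) / (\<zeta>\<^sup>2 / lam\<^sup>2 - 1))"
    unfolding qlog_kernel_def power_divide by simp
  ultimately show ?thesis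
    by (simp only:)
qed

lemma mult_ln_div_mono:
  fixes lam c u P D :: real
  assumes "0 < lam" "0 < c" "u \<noteq> 0" "0 < P / (c * u)" "0 < D / (c * u)" "P \<le> D"
  shows "lam / u * ln (P / (c * u)) \<le> lam / u * ln (D / (c * u))"
proof (cases "0 < u")
  case True
  then have "ln (P / (c * u)) \<le> ln (D / (c * u))"
    using assms by (simp add: divide_right_mono)
  then show ?thesis
    using assms True by (intro mult_left_mono) auto
next
  case False
  with assms have "c * u < 0"
    by (simp add: mult_pos_neg)
  then have "ln (D / (c * u)) \<le> ln (P / (c * u))"
    using assms by (simp add: divide_right_mono_neg)
  moreover have "lam / u < 0"
    using assms False by (simp add: divide_pos_neg)
  ultimately show ?thesis
    by (intro mult_left_mono_neg) auto
qed

lemma slope_pos_if_DERIV_pos: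
  fixes \<psi> p :: "real \<Rightarrow> real"
  assumes \<psi>': "\<And>z. 0 < z \<Longrightarrow> (\<psi> has_real_derivative p z) (at z)"
    and p_pos: "\<And>z. 0 < z \<Longrightarrow> 0 < p z"
    and "0 < x" "0 < a" "x \<noteq> a"
  shows "0 < (\<psi> x - \<psi> a) / (x - a)"
proof -
  have "\<psi> u < \<psi> v" if "0 < u" "u < v" for u v
  proof (rule DERIV_pos_imp_increasing_open[OF \<open>u < v\<close>])
    show "\<exists>D. (\<psi> has_real_derivative D) (at y) \<and> 0 < D" if "u < y" "y < v" for y
      using that \<open>0 < u\<close> \<psi>' p_pos by (intro exI[of _ "p y"]) auto
    show "continuous_on {u..v} \<psi>"
      using \<open>0 < u\<close> by (intro continuous_at_imp_continuous_on) (auto intro: DERIV_isCont[OF \<psi>'])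
  qed
  then show ?thesis
    using assms by (cases "x < a") (auto intro: divide_neg_neg)
qed

lemma vartheta_integrand_qlog_kernel_forms:
  fixes \<psi> p :: "real \<Rightarrow> real"
  assumes "0 < lam" "0 < \<zeta>" "\<zeta> \<noteq> lam"
    and \<psi>': "\<And>z. 0 < z \<Longrightarrow> (\<psi> has_real_derivative p z) (at z)"
    and p_pos: "\<And>z. 0 < z \<Longrightarrow> 0 < p z"
  shows "vartheta_integrand \<psi> lam \<zeta>
           = lam / (\<zeta>\<^sup>2 - lam\<^sup>2) * ln ((\<psi> (\<zeta>\<^sup>2) - \<psi> (lam\<^sup>2)) / (p (lam\<^sup>2) * (\<zeta>\<^sup>2 - lam\<^sup>2)))"
    and "qlog_kernel b (\<zeta> / lam) / lam
           = lam / (\<zeta>\<^sup>2 - lam\<^sup>2) * ln (p (lam\<^sup>2) * lam\<^sup>2 * qlog b (\<zeta>\<^sup>2 / lam\<^sup>2) / (p (lam\<^sup>2) * (\<zeta>\<^sup>2 - lam\<^sup>2)))"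
    and "0 < (\<psi> (\<zeta>\<^sup>2) - \<psi> (lam\<^sup>2)) / (p (lam\<^sup>2) * (\<zeta>\<^sup>2 - lam\<^sup>2))"
    and "0 < p (lam\<^sup>2) * lam\<^sup>2 * qlog b (\<zeta>\<^sup>2 / lam\<^sup>2) / (p (lam\<^sup>2) * (\<zeta>\<^sup>2 - lam\<^sup>2))"
proof -
  have x: "0 < \<zeta>\<^sup>2" "\<zeta>\<^sup>2 \<noteq> lam\<^sup>2" "\<zeta>\<^sup>2 - lam\<^sup>2 \<noteq> 0"
    using assms by (auto simp: power2_eq_iff)
  have c: "deriv \<psi> (lam\<^sup>2) = p (lam\<^sup>2)" "0 < p (lam\<^sup>2)"
    using assms by (auto intro: DERIV_imp_deriv)
  show "vartheta_integrand \<psi> lam \<zeta>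
      = lam / (\<zeta>\<^sup>2 - lam\<^sup>2) * ln ((\<psi> (\<zeta>\<^sup>2) - \<psi> (lam\<^sup>2)) / (p (lam\<^sup>2) * (\<zeta>\<^sup>2 - lam\<^sup>2)))"
    unfolding vartheta_integrand_eq c(1) ..
  show "qlog_kernel b (\<zeta> / lam) / lam
      = lam / (\<zeta>\<^sup>2 - lam\<^sup>2) * ln (p (lam\<^sup>2) * lam\<^sup>2 * qlog b (\<zeta>\<^sup>2 / lam\<^sup>2) / (p (lam\<^sup>2) * (\<zeta>\<^sup>2 - lam\<^sup>2)))"
    using c(2) by (intro qlog_kernel_scaled_eq[OF assms(1-3)]) simp
  have "0 < (\<psi> (\<zeta>\<^sup>2) - \<psi> (lam\<^sup>2)) / (\<zeta>\<^sup>2 - lam\<^sup>2)"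
    using slope_pos_if_DERIV_pos[OF \<psi>' p_pos x(1) _ x(2)] assms by simp
  then have "0 < (\<psi> (\<zeta>\<^sup>2) - \<psi> (lam\<^sup>2)) / (\<zeta>\<^sup>2 - lam\<^sup>2) / p (lam\<^sup>2)"
    using c(2) by (rule divide_pos_pos)
  then show "0 < (\<psi> (\<zeta>\<^sup>2) - \<psi> (lam\<^sup>2)) / (p (lam\<^sup>2) * (\<zeta>\<^sup>2 - lam\<^sup>2))"
    by (simp add: mult.commute)
  have "0 < qlog b (\<zeta>\<^sup>2 / lam\<^sup>2) / (\<zeta>\<^sup>2 / lam\<^sup>2 - 1)"
    using x assms by (intro qlog_div_diff_one_pos) (auto simp: field_simps)
  also have "\<dots> = p (lam\<^sup>2) * lam\<^sup>2 * qlog b (\<zeta>\<^sup>2 / lam\<^sup>2) / (p (lam\<^sup>2) * (\<zeta>\<^sup>2 - lam\<^sup>2))"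
    using x(3) c(2) assms(1) by (simp add: field_simps)
  finally show "0 < p (lam\<^sup>2) * lam\<^sup>2 * qlog b (\<zeta>\<^sup>2 / lam\<^sup>2) / (p (lam\<^sup>2) * (\<zeta>\<^sup>2 - lam\<^sup>2))" .
qed

lemma qlog_kernel_le_vartheta_integrand:
  fixes \<psi> p d :: "real \<Rightarrow> real"
  assumes "0 < lam" "0 < \<zeta>" "\<zeta> \<noteq> lam"
    and \<psi>': "\<And>z. 0 < z \<Longrightarrow> (\<psi> has_real_derivative p z) (at z)"
    and p': "\<And>z. 0 < z \<Longrightarrow> (p has_real_derivative - d z) (at z)"
    and p_pos: "\<And>z. 0 < z \<Longrightarrow> 0 < p z"
    and "\<And>z. 0 < z \<Longrightarrow> z * d z \<le> b * p z"
  shows "qlog_kernel b (\<zeta> / lam) / lam \<le> vartheta_integrand \<psi> lam \<zeta>"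
proof -
  note forms = vartheta_integrand_qlog_kernel_forms[OF assms(1-3) \<psi>' p_pos]
  have increment: "p (lam\<^sup>2) * lam\<^sup>2 * qlog b (\<zeta>\<^sup>2 / lam\<^sup>2) \<le> \<psi> (\<zeta>\<^sup>2) - \<psi> (lam\<^sup>2)"
    using assms by (intro increment_ge_qlog[OF _ _ \<psi>' p']) auto
  have "lam / (\<zeta>\<^sup>2 - lam\<^sup>2) * ln (p (lam\<^sup>2) * lam\<^sup>2 * qlog b (\<zeta>\<^sup>2 / lam\<^sup>2) / (p (lam\<^sup>2) * (\<zeta>\<^sup>2 - lam\<^sup>2)))
      \<le> lam / (\<zeta>\<^sup>2 - lam\<^sup>2) * ln ((\<psi> (\<zeta>\<^sup>2) - \<psi> (lam\<^sup>2)) / (p (lam\<^sup>2) * (\<zeta>\<^sup>2 - lam\<^sup>2)))"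
    by (rule mult_ln_div_mono[OF \<open>0 < lam\<close> _ _ forms(4) forms(3) increment])
       (use assms in \<open>auto simp: power2_eq_iff\<close>)
  then show ?thesis
    by (simp only: forms(1,2))
qed

lemma vartheta_integrand_le_qlog_kernel:
  fixes \<psi> p d :: "real \<Rightarrow> real"
  assumes "0 < lam" "0 < \<zeta>" "\<zeta> \<noteq> lam"
    and \<psi>': "\<And>z. 0 < z \<Longrightarrow> (\<psi> has_real_derivative p z) (at z)"
    and p': "\<And>z. 0 < z \<Longrightarrow> (p has_real_derivative - d z) (at z)"
    and p_pos: "\<And>z. 0 < z \<Longrightarrow> 0 < p z"
    and "\<And>z. 0 < z \<Longrightarrow> b * p z \<le> z * d z"
  shows "vartheta_integrand \<psi> lam \<zeta> \<le> qlog_kernel b (\<zeta> / lam) / lam"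
proof -
  note forms = vartheta_integrand_qlog_kernel_forms[OF assms(1-3) \<psi>' p_pos]
  have increment: "\<psi> (\<zeta>\<^sup>2) - \<psi> (lam\<^sup>2) \<le> p (lam\<^sup>2) * lam\<^sup>2 * qlog b (\<zeta>\<^sup>2 / lam\<^sup>2)"
    using assms by (intro increment_le_qlog[OF _ _ \<psi>' p']) auto
  have "lam / (\<zeta>\<^sup>2 - lam\<^sup>2) * ln ((\<psi> (\<zeta>\<^sup>2) - \<psi> (lam\<^sup>2)) / (p (lam\<^sup>2) * (\<zeta>\<^sup>2 - lam\<^sup>2)))
      \<le> lam / (\<zeta>\<^sup>2 - lam\<^sup>2) * ln (p (lam\<^sup>2) * lam\<^sup>2 * qlog b (\<zeta>\<^sup>2 / lam\<^sup>2) / (p (lam\<^sup>2) * (\<zeta>\<^sup>2 - lam\<^sup>2)))"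
    by (rule mult_ln_div_mono[OF \<open>0 < lam\<close> _ _ forms(3) forms(4) increment])
       (use assms in \<open>auto simp: power2_eq_iff\<close>)
  then show ?thesis
    by (simp only: forms(1,2))
qed

lemma vartheta_integrand_measurable:
  assumes "continuous_on {0<..} \<psi>" "0 < lam"
  shows "set_borel_measurable lborel {0<..} (vartheta_integrand \<psi> lam)"
proof -
  define \<psi>0 where "\<psi>0 x = (if x \<in> {0<..} then \<psi> x else 0)" for x :: real
  have [measurable]: "\<psi>0 \<in> borel_measurable borel"
    unfolding \<psi>0_def by (rule borel_measurable_continuous_on_if) (use assms(1) in auto)
  have "indicator {0<..} \<zeta> *\<^sub>R vartheta_integrand \<psi> lam \<zeta> = indicator {0<..} \<zeta> *
      (lam / (lam\<^sup>2 - \<zeta>\<^sup>2) * ln (deriv \<psi> (lam\<^sup>2) * (lam\<^sup>2 - \<zeta>\<^sup>2) / (\<psi>0 (lam\<^sup>2) - \<psi>0 (\<zeta>\<^sup>2))))" for \<zeta>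
    using assms(2) by (auto simp: indicator_def vartheta_integrand_def \<psi>0_def)
  then show ?thesis
    unfolding set_borel_measurable_def by simp
qed

lemma set_integrable_vartheta_integrand:
  fixes \<psi> p d :: "real \<Rightarrow> real"
  assumes "0 < lam"
    and \<psi>': "\<And>z. 0 < z \<Longrightarrow> (\<psi> has_real_derivative p z) (at z)"
    and p': "\<And>z. 0 < z \<Longrightarrow> (p has_real_derivative - d z) (at z)"
    and p_pos: "\<And>z. 0 < z \<Longrightarrow> 0 < p z"
    and d_nonneg: "\<And>z. 0 < z \<Longrightarrow> 0 \<le> d z"
    and "0 \<le> \<beta>" and upper: "\<And>z. 0 < z \<Longrightarrow> z * d z \<le> \<beta> * p z"
  shows "set_integrable lborel {0<..} (vartheta_integrand \<psi> lam)"
proof -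
  have "continuous_on {0<..} \<psi>"
    using \<psi>' by (intro continuous_at_imp_continuous_on) (auto intro: DERIV_isCont)
  then show ?thesis
  proof (rule set_integrable_bound[OF qlog_kernel_scaled_integral(1)[OF \<open>0 \<le> \<beta>\<close> \<open>0 < lam\<close>]
        vartheta_integrand_measurable[OF _ \<open>0 < lam\<close>]])
    show "AE \<zeta> in lborel. \<zeta> \<in> {0<..} \<longrightarrow>
        norm (vartheta_integrand \<psi> lam \<zeta>) \<le> norm (qlog_kernel \<beta> (\<zeta> / lam) / lam)"
      using AE_lborel_singleton[of lam]
    proof eventually_elim
      case (elim \<zeta>)
      show ?case
      proof
        assume "\<zeta> \<in> {0<..}"
        with elim have \<zeta>: "0 < \<zeta>" "\<zeta> \<noteq> lam" "0 < \<zeta> / lam"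
          using \<open>0 < lam\<close> by auto
        have "qlog_kernel \<beta> (\<zeta> / lam) / lam \<le> vartheta_integrand \<psi> lam \<zeta>"
          by (rule qlog_kernel_le_vartheta_integrand[OF \<open>0 < lam\<close> \<zeta>(1,2) \<psi>' p' p_pos upper])
        moreover have "vartheta_integrand \<psi> lam \<zeta> \<le> qlog_kernel 0 (\<zeta> / lam) / lam"
          by (rule vartheta_integrand_le_qlog_kernel[OF \<open>0 < lam\<close> \<zeta>(1,2) \<psi>' p' p_pos])
             (use d_nonneg in \<open>auto intro: mult_nonneg_nonneg\<close>)
        moreover have "qlog_kernel 0 (\<zeta> / lam) / lam \<le> 0"
          using \<zeta> \<open>0 < lam\<close> qlog_kernel_nonpos[of 0 "\<zeta> / lam"] by (simp add: divide_nonpos_pos)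
        ultimately show "norm (vartheta_integrand \<psi> lam \<zeta>) \<le> norm (qlog_kernel \<beta> (\<zeta> / lam) / lam)"
          by (auto simp: abs_if)
      qed
    qed
  qed
qed

lemma vartheta_bounds:
  fixes \<psi> p d :: "real \<Rightarrow> real"
  assumes "0 < lam"
    and \<psi>': "\<And>z. 0 < z \<Longrightarrow> (\<psi> has_real_derivative p z) (at z)"
    and p': "\<And>z. 0 < z \<Longrightarrow> (p has_real_derivative - d z) (at z)"
    and p_pos: "\<And>z. 0 < z \<Longrightarrow> 0 < p z"
    and "0 \<le> \<gamma>"
    and lower: "\<And>z. 0 < z \<Longrightarrow> \<gamma> * p z \<le> z * d z"
    and upper: "\<And>z. 0 < z \<Longrightarrow> z * d z \<le> \<beta> * p z"
  shows "\<gamma> * (pi / 4) \<le> vartheta \<psi> lam" and "vartheta \<psi> lam \<le> \<beta> * (pi / 4)"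
proof -
  have d_nonneg: "0 \<le> d z" if "0 < z" for z
  proof -
    have "0 \<le> z * d z"
      using lower[OF that] p_pos[OF that] \<open>0 \<le> \<gamma>\<close> by (meson mult_nonneg_nonneg less_imp_le order_trans)
    with that show ?thesis
      by (simp add: zero_le_mult_iff)
  qed
  have "\<gamma> * p 1 \<le> \<beta> * p 1"
    using lower[of 1] upper[of 1] by simp
  with p_pos[of 1] \<open>0 \<le> \<gamma>\<close> have "0 \<le> \<beta>"
    by simp
  define F where "F = vartheta_integrand \<psi> lam"
  have F_integrable: "set_integrable lborel {0<..} F"
    unfolding F_def
    using set_integrable_vartheta_integrand[OF \<open>0 < lam\<close> \<psi>' p' p_pos d_nonneg \<open>0 \<le> \<beta>\<close> upper] .
  have AE_neq: "AE \<zeta> in lborel. \<zeta> \<noteq> lam"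
    by (rule AE_lborel_singleton)
  have "- (\<beta> * pi\<^sup>2 / 4) \<le> (LINT \<zeta>:{0<..}|lborel. F \<zeta>)"
    unfolding qlog_kernel_scaled_integral(2)[OF \<open>0 \<le> \<beta>\<close> \<open>0 < lam\<close>, symmetric]
    using qlog_kernel_scaled_integral(1)[OF \<open>0 \<le> \<beta>\<close> \<open>0 < lam\<close>] F_integrable
    by (rule set_integral_mono_AE)
       (use AE_neq qlog_kernel_le_vartheta_integrand[OF \<open>0 < lam\<close> _ _ \<psi>' p' p_pos upper]
         in \<open>auto simp: F_def elim: AE_mp\<close>)
  moreover have "(LINT \<zeta>:{0<..}|lborel. F \<zeta>) \<le> - (\<gamma> * pi\<^sup>2 / 4)"
    unfolding qlog_kernel_scaled_integral(2)[OF \<open>0 \<le> \<gamma>\<close> \<open>0 < lam\<close>, symmetric]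
    using F_integrable qlog_kernel_scaled_integral(1)[OF \<open>0 \<le> \<gamma>\<close> \<open>0 < lam\<close>]
    by (rule set_integral_mono_AE)
       (use AE_neq vartheta_integrand_le_qlog_kernel[OF \<open>0 < lam\<close> _ _ \<psi>' p' p_pos lower]
         in \<open>auto simp: F_def elim: AE_mp\<close>)
  ultimately show "\<gamma> * (pi / 4) \<le> vartheta \<psi> lam" "vartheta \<psi> lam \<le> \<beta> * (pi / 4)"
    unfolding vartheta_eq_integral F_def[symmetric] by (simp_all add: field_simps power2_eq_square)
qed

lemma vartheta_elasticity_bounds:
  fixes \<psi> p d :: "real \<Rightarrow> real"
  assumes "0 < lam"
    and \<psi>': "\<And>z. 0 < z \<Longrightarrow> (\<psi> has_real_derivative p z) (at z)"
    and p': "\<And>z. 0 < z \<Longrightarrow> (p has_real_derivative - d z) (at z)"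
    and p_pos: "\<And>z. 0 < z \<Longrightarrow> 0 < p z"
    and d_nonneg: "\<And>z. 0 < z \<Longrightarrow> 0 \<le> d z"
    and elasticity_le_2: "\<And>z. 0 < z \<Longrightarrow> z * d z \<le> 2 * p z"
  shows "(INF \<xi>\<in>{0<..}. ereal (\<xi> * d \<xi> / p \<xi>)) * ereal (pi / 4) \<le> ereal (vartheta \<psi> lam)"
    and "ereal (vartheta \<psi> lam) \<le> (SUP \<xi>\<in>{0<..}. ereal (\<xi> * d \<xi> / p \<xi>)) * ereal (pi / 4)"
proof -
  define r where "r \<xi> = \<xi> * d \<xi> / p \<xi>" for \<xi>
  have r_bounds: "0 \<le> r \<xi> \<and> r \<xi> \<le> 2" if "0 < \<xi>" for \<xi>
    using d_nonneg[OF that] p_pos[OF that] elasticity_le_2[OF that] that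
    by (simp add: r_def divide_le_eq)
  then have bdd: "bdd_below (r ` {0<..})" "bdd_above (r ` {0<..})"
    by (auto intro!: bdd_belowI2[where m = 0] bdd_aboveI2[where M = 2])
  define \<gamma> where "\<gamma> = (INF \<xi>\<in>{0<..}. r \<xi>)"
  define \<beta> where "\<beta> = (SUP \<xi>\<in>{0<..}. r \<xi>)"
  have "(INF \<xi>\<in>{0<..}. ereal (r \<xi>)) = ereal \<gamma>"
    using ereal_Inf'[OF bdd(1)] by (simp add: \<gamma>_def image_comp)
  moreover have "(SUP \<xi>\<in>{0<..}. ereal (r \<xi>)) = ereal \<beta>"
  proof -
    have "ereal (r 1) \<le> (SUP \<xi>\<in>{0<..}. ereal (r \<xi>))" "(SUP \<xi>\<in>{0<..}. ereal (r \<xi>)) \<le> 2"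
      using r_bounds by (auto intro: SUP_upper SUP_least)
    then show ?thesis
      unfolding \<beta>_def by (intro ereal_SUP[symmetric]) auto
  qed
  moreover have "0 \<le> \<gamma>"
    unfolding \<gamma>_def using r_bounds by (intro cINF_greatest) auto
  moreover have "\<gamma> * p z \<le> z * d z" "z * d z \<le> \<beta> * p z" if "0 < z" for z
    using cINF_lower[OF bdd(1), of z] cSUP_upper[OF _ bdd(2), of z] p_pos[OF that] that
    by (simp_all add: \<gamma>_def \<beta>_def r_def le_divide_eq divide_le_eq)
  ultimately show "(INF \<xi>\<in>{0<..}. ereal (\<xi> * d \<xi> / p \<xi>)) * ereal (pi / 4) \<le> ereal (vartheta \<psi> lam)"
    and "ereal (vartheta \<psi> lam) \<le> (SUP \<xi>\<in>{0<..}. ereal (\<xi> * d \<xi> / p \<xi>)) * ereal (pi / 4)"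
    using vartheta_bounds[OF \<open>0 < lam\<close> \<psi>' p' p_pos, of \<gamma> \<beta>] by (simp_all add: r_def)
qed

text \<open>Here \<open>\<psi>\<close> is constant on \<open>(0,\<infinity>)\<close>, and both sides vanish only because \<open>x / 0 = 0\<close> and
  \<open>ln 0 = 0\<close>; this is why the theorem needs no hypothesis excluding constant \<open>\<psi>\<close>.\<close>
lemma vartheta_elasticity_bounds_degenerate:
  fixes \<psi> p d :: "real \<Rightarrow> real"
  assumes "0 < lam"
    and \<psi>': "\<And>z. 0 < z \<Longrightarrow> (\<psi> has_real_derivative p z) (at z)"
    and p_0: "\<And>z. 0 < z \<Longrightarrow> p z = 0"
  shows "(INF \<xi>\<in>{0<..}. ereal (\<xi> * d \<xi> / p \<xi>)) * ereal (pi / 4) \<le> ereal (vartheta \<psi> lam)"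
    and "ereal (vartheta \<psi> lam) \<le> (SUP \<xi>\<in>{0<..}. ereal (\<xi> * d \<xi> / p \<xi>)) * ereal (pi / 4)"
proof -
  have "(INF \<xi>\<in>{0<..}. ereal (\<xi> * d \<xi> / p \<xi>)) = (INF \<xi>\<in>({0<..} :: real set). 0)"
    and "(SUP \<xi>\<in>{0<..}. ereal (\<xi> * d \<xi> / p \<xi>)) = (SUP \<xi>\<in>({0<..} :: real set). 0)"
    using p_0 by (auto intro!: INF_cong SUP_cong)
  moreover have "deriv \<psi> (lam\<^sup>2) = 0"
    using DERIV_imp_deriv[OF \<psi>'] p_0 \<open>0 < lam\<close> by simp
  then have "vartheta \<psi> lam = 0"
    by (simp add: vartheta_def)
  ultimately show "(INF \<xi>\<in>{0<..}. ereal (\<xi> * d \<xi> / p \<xi>)) * ereal (pi / 4) \<le> ereal (vartheta \<psi> lam)"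
    and "ereal (vartheta \<psi> lam) \<le> (SUP \<xi>\<in>{0<..}. ereal (\<xi> * d \<xi> / p \<xi>)) * ereal (pi / 4)"
    by simp_all
qed

lemma deriv_deriv_eq_on_pos:
  fixes f f' f'' :: "real \<Rightarrow> real"
  assumes f': "\<And>z. 0 < z \<Longrightarrow> (f has_real_derivative f' z) (at z)"
    and f'': "\<And>z. 0 < z \<Longrightarrow> (f' has_real_derivative f'' z) (at z)"
    and "0 < z"
  shows "deriv f z = f' z" and "deriv (deriv f) z = f'' z"
proof -
  show "deriv f z = f' z"
    using f'[OF \<open>0 < z\<close>] by (rule DERIV_imp_deriv)
  have "(deriv f has_real_derivative f'' z) (at z)"
  proof (rule has_field_derivative_transform_within_open[OF f''[OF \<open>0 < z\<close>], where S = "{0<..}"])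
    show "f' x = deriv f x" if "x \<in> {0<..}" for x
      using DERIV_imp_deriv[OF f'[of x]] that by simp
  qed (use \<open>0 < z\<close> in auto)
  then show "deriv (deriv f) z = f'' z"
    by (rule DERIV_imp_deriv)
qed

theorem proposition4p3:
  fixes \<psi> :: "real \<Rightarrow> real" and lam :: real
  assumes "complete_bernstein \<psi>"
    and "\<exists>z>0. \<psi> z \<noteq> 0"
    and "lam > 0"
  shows "(INF \<xi>\<in>{0<..}. ereal (\<xi> * \<bar>deriv (deriv \<psi>) \<xi>\<bar> / deriv \<psi> \<xi>)) * ereal (pi / 4)
           \<le> ereal (vartheta \<psi> lam) \<and>
         ereal (vartheta \<psi> lam)
           \<le> (SUP \<xi>\<in>{0<..}. ereal (\<xi> * \<bar>deriv (deriv \<psi>) \<xi>\<bar> / deriv \<psi> \<xi>)) * ereal (pi / 4)"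
proof -
  obtain p d where \<psi>': "\<And>z. 0 < z \<Longrightarrow> (\<psi> has_real_derivative p z) (at z)"
    and p': "\<And>z. 0 < z \<Longrightarrow> (p has_real_derivative - d z) (at z)"
    and d_nonneg: "\<And>z. 0 < z \<Longrightarrow> 0 \<le> d z"
    and elasticity_le_2: "\<And>z. 0 < z \<Longrightarrow> z * d z \<le> 2 * p z"
    and cases: "(\<forall>z>0. 0 < p z) \<or> (\<forall>z>0. p z = 0 \<and> d z = 0)"
    using complete_bernstein_derivatives[OF assms(1)] by blast
  have "\<xi> * \<bar>deriv (deriv \<psi>) \<xi>\<bar> / deriv \<psi> \<xi> = \<xi> * d \<xi> / p \<xi>" if "0 < \<xi>" for \<xi>
    using deriv_deriv_eq_on_pos[where f = \<psi> and f' = p and f'' = "\<lambda>z. - d z"] \<psi>' p' that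
      d_nonneg[OF that] by simp
  then have "(INF \<xi>\<in>{0<..}. ereal (\<xi> * \<bar>deriv (deriv \<psi>) \<xi>\<bar> / deriv \<psi> \<xi>))
        = (INF \<xi>\<in>{0<..}. ereal (\<xi> * d \<xi> / p \<xi>))"
    and "(SUP \<xi>\<in>{0<..}. ereal (\<xi> * \<bar>deriv (deriv \<psi>) \<xi>\<bar> / deriv \<psi> \<xi>))
        = (SUP \<xi>\<in>{0<..}. ereal (\<xi> * d \<xi> / p \<xi>))"
    by (auto intro!: INF_cong SUP_cong)
  with cases show ?thesis
    using vartheta_elasticity_bounds[OF \<open>lam > 0\<close> \<psi>' p' _ d_nonneg elasticity_le_2]
      vartheta_elasticity_bounds_degenerate[OF \<open>lam > 0\<close> \<psi>', of d]
    by auto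
qed

end
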